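(* Suppose the solution sets of (P) and (D) are nonempty and $A$ has full row rank, and suppose $\{\tau_k\}$ is positive, nonincreasing and $\tau_k\downarrow\tau_\infty>0$. Let $\{(y^k,x^k)\}$ be generated by Algorithm Snipal (described below) where each $y^{k+1}$ satisfies the stopping criterion (A'): $\|\nabla\psi_k(y^{k+1})\|\le\frac{\min(\sqrt{\tau_k},1)}{\sigma_k}\epsilon_k$ with $\epsilon_k\ge0$, $\sum_k\epsilon_k<\infty$. Then $\{(y^k,x^k)\}$ is bounded, $\{x^k\}$ converges to an optimal solution of (P) and $\{y^k\}$ converges to an optimal solution of (D).
   Context: Data: $A\in\mathbb{R}^{m\times n}$, $b\in\mathbb{R}^m$, $c\in\mathbb{R}^n$, $K=\{x\in\mathbb{R}^n\mid l\le x\le u\}$ with $l_i\in[-\infty,\infty)$, $u_i\in(-\infty,\infty]$; $\delta_K$ its indicator, $\delta_K^*$ its Fenchel conjugate, $\Pi_K$ the projection onto $K$. (P): $\min\{c^Tx+\delta_K(x)\mid Ax=b\}$; (D): $\max\{-\delta_K^*(A^Ty-c)+b^Ty\mid y\in\mathbb{R}^m\}$. Augmented Lagrangian $L_\sigma(y;x)=-b^Ty-\langle\Pi_K(x-\sigma(c-A^Ty)),c-A^Ty\rangle-\frac{1}{2\sigma}\|\Pi_K(x-\sigma(c-A^Ty))-x\|^2$. Algorithm Snipal: given $(x^0,y^0)$, $\sigma_0>0$, a nondecreasing sequence $\sigma_k\uparrow\sigma_\infty\le\infty$ and a positive nonincreasing sequence $\{\tau_k\}$; for $k=0,1,\dots$: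 compute $y^{k+1}$ as an approximate minimizer of $\psi_k(y):=L_{\sigma_k}(y;x^k)+\frac{\tau_k}{2\sigma_k}\|y-y^k\|^2$, then set $x^{k+1}=\Pi_K(x^k-\sigma_k(c-A^Ty^{k+1}))$. Here $\nabla\psi_k(y)=-b+A\Pi_K(x^k+\sigma_k(A^Ty-c))+\tau_k\sigma_k^{-1}(y-y^k)$. *)

theory Defs
  imports "HOL-Analysis.Analysis" "HOL-Library.Extended_Real"
begin

definition box_set :: "('n::finite \<Rightarrow> ereal) \<Rightarrow> ('n \<Rightarrow> ereal) \<Rightarrow> (real^'n) set" where
  "box_set l u = {x. \<forall>i. l i \<le> ereal (x $ i) \<and> ereal (x $ i) \<le> u i}"

definition proj_K :: "(real^'n::finite) set \<Rightarrow> real^'n \<Rightarrow> real^'n" where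
  "proj_K K x = closest_point K x"

definition support_fun :: "(real^'n::finite) set \<Rightarrow> real^'n \<Rightarrow> ereal" where
  "support_fun K z = (SUP x\<in>K. ereal (z \<bullet> x))"

definition primal_opt :: "real^'n^'m \<Rightarrow> real^'m \<Rightarrow> real^'n \<Rightarrow> (real^'n::finite) set \<Rightarrow> real^'n \<Rightarrow> bool" where
  "primal_opt A b c K x \<longleftrightarrow> x \<in> K \<and> A *v x = b \<and>
     (\<forall>x'. x' \<in> K \<and> A *v x' = b \<longrightarrow> c \<bullet> x \<le> c \<bullet> x')"

definition dual_obj :: "real^'n^'m \<Rightarrow> real^'m \<Rightarrow> real^'n \<Rightarrow> (real^'n::finite) set \<Rightarrow> real^'m::finite \<Rightarrow> ereal" where
  "dual_obj A b c K y = ereal (b \<bullet> y) - support_fun K (transpose A *v y - c)"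

definition dual_opt :: "real^'n^'m \<Rightarrow> real^'m \<Rightarrow> real^'n \<Rightarrow> (real^'n::finite) set \<Rightarrow> real^'m::finite \<Rightarrow> bool" where
  "dual_opt A b c K y \<longleftrightarrow> dual_obj A b c K y \<noteq> -\<infinity> \<and> dual_obj A b c K y \<noteq> \<infinity> \<and>
     (\<forall>y'. dual_obj A b c K y' \<le> dual_obj A b c K y)"

text \<open>Gradient of psi_k(y) = L_sigma(y;x) + tau/(2 sigma) ||y - y_old||^2, as given in the paper:
  -b + A Pi_K(x + sigma (A^T y - c)) + (tau/sigma)(y - y_old).\<close>
definition grad_psi :: "real^'n^'m \<Rightarrow> real^'m \<Rightarrow> real^'n \<Rightarrow> (real^'n::finite) set \<Rightarrow>
    real \<Rightarrow> real \<Rightarrow> real^'n \<Rightarrow> real^'m::finite \<Rightarrow> real^'m \<Rightarrow> real^'m" where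
  "grad_psi A b c K \<sigma> \<tau> x yold y =
     - b + A *v proj_K K (x + \<sigma> *\<^sub>R (transpose A *v y - c)) + (\<tau> / \<sigma>) *\<^sub>R (y - yold)"

end

theory Submission
  imports Defs
begin

text \<open>
  Fix a KKT pair \<open>(xs, ys)\<close> and put \<open>\<Phi>(k) = \<parallel>x k - xs\<parallel>\<^sup>2 + \<tau> k \<parallel>y k - ys\<parallel>\<^sup>2\<close>.
  The x-update is a projection onto K; its variational inequality, tested at \<open>xs\<close> and combined
  with the KKT conditions, gives
  \<open>\<Phi>(k+1) \<le> \<Phi>(k) - \<Delta>(k) + 2 \<epsilon> k \<surd>\<Phi>(k+1)\<close>, where \<open>\<Delta>(k)\<close> is the same weighted
  distance between consecutive iterates and the error term is controlled by the stopping criterion.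
  As \<open>\<tau>\<close> is nonincreasing and \<open>\<epsilon>\<close> summable, \<open>\<surd>\<Phi>\<close> converges and \<open>\<Delta>(k) \<rightarrow> 0\<close>; since
  \<open>\<tau> k \<ge> \<tau>\<^sub>\<infinity> > 0\<close>, the iterates are bounded and their steps vanish. In the limit along a
  convergent subsequence, the gradient formula and the projection inequality turn into the KKT
  conditions, so the cluster point is itself a KKT pair; taking it as \<open>(xs, ys)\<close> gives
  \<open>\<Phi>(k) \<rightarrow> 0\<close>. A KKT pair exists since for a box a primal solution yields a multiplier by
  Farkas' lemma, and KKT pairs solve (P) and (D).
\<close>

lemma box_set_closed: "closed (box_set l u)"
proof -
  have "box_set l u = (\<Inter>i. {x. l i \<le> ereal (x $ i)} \<inter> {x. ereal (x $ i) \<le> u i})"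
    by (auto simp: box_set_def)
  moreover have "closed ({x. l i \<le> ereal (x $ i)} \<inter> {x. ereal (x $ i) \<le> u i})" for i
    by (intro closed_Int closed_Collect_le continuous_intros)
  ultimately show ?thesis by auto
qed

lemma box_set_convex: "convex (box_set l u)"
proof -
  have box: "box_set l u = (\<Inter>i. (\<lambda>x. x $ i) -` {t. l i \<le> ereal t \<and> ereal t \<le> u i})"
    by (auto simp: box_set_def)
  have "convex {t. l i \<le> ereal t \<and> ereal t \<le> u i}" for i
    unfolding is_interval_convex_1[symmetric] is_interval_1 by simp (meson ereal_less_eq(3) order_trans)
  then show ?thesis
    unfolding box by (intro convex_INT convex_linear_vimage bounded_linear.linear[OF bounded_linear_vec_nth])
qed

lemma eventually_ereal_ge_on_ray:
  assumes "lo \<le> ereal x" "d < 0 \<Longrightarrow> ereal x \<noteq> lo"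
  shows "\<forall>\<^sub>F t in at_right 0. lo \<le> ereal (x + t * d)"
proof (cases "d < 0")
  case True
  have "((\<lambda>t. ereal (x + t * d)) \<longlongrightarrow> ereal x) (at_right 0)"
    by (subst lim_ereal) (auto intro!: tendsto_eq_intros)
  moreover have "lo < ereal x" using assms True by auto
  ultimately have "\<forall>\<^sub>F t in at_right 0. lo < ereal (x + t * d)" by (rule order_tendstoD(1))
  then show ?thesis by (rule eventually_mono) simp
next
  case False
  have "lo \<le> ereal (x + t * d)" if "t > 0" for t
  proof -
    have "x \<le> x + t * d" using False that by simp
    then show ?thesis using assms(1) by (meson ereal_less_eq(3) order_trans)
  qed
  with eventually_at_right_less[of 0] show ?thesis by (auto elim: eventually_mono)
qed

lemma eventually_ereal_le_on_ray:
  assumes "ereal x \<le> hi" "d > 0 \<Longrightarrow> ereal x \<noteq> hi"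
  shows "\<forall>\<^sub>F t in at_right 0. ereal (x + t * d) \<le> hi"
proof (cases "d > 0")
  case True
  have "((\<lambda>t. ereal (x + t * d)) \<longlongrightarrow> ereal x) (at_right 0)"
    by (subst lim_ereal) (auto intro!: tendsto_eq_intros)
  moreover have "ereal x < hi" using assms True by auto
  ultimately have "\<forall>\<^sub>F t in at_right 0. ereal (x + t * d) < hi" by (rule order_tendstoD(2))
  then show ?thesis by (rule eventually_mono) simp
next
  case False
  have "ereal (x + t * d) \<le> hi" if "t > 0" for t
  proof -
    have "x + t * d \<le> x" using False that by (simp add: mult_nonneg_nonpos less_imp_le)
    then show ?thesis using assms(1) by (meson ereal_less_eq(3) order_trans)
  qed
  with eventually_at_right_less[of 0] show ?thesis by (auto elim: eventually_mono)
qed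

lemma box_set_feasible_direction:
  assumes "xs \<in> box_set l u"
    and "\<And>i. 0 < a $ i \<Longrightarrow> ereal (xs $ i) \<noteq> u i"
    and "\<And>i. a $ i < 0 \<Longrightarrow> ereal (xs $ i) \<noteq> l i"
  obtains t where "t > 0" "xs + t *\<^sub>R a \<in> box_set l u"
proof -
  have "\<forall>\<^sub>F t in at_right 0. \<forall>i. l i \<le> ereal (xs $ i + t * a $ i) \<and> ereal (xs $ i + t * a $ i) \<le> u i"
    using assms by (intro eventually_all_finite eventually_conj eventually_ereal_ge_on_ray
        eventually_ereal_le_on_ray) (auto simp: box_set_def)
  then have "\<forall>\<^sub>F t in at_right 0. t > 0 \<and> xs + t *\<^sub>R a \<in> box_set l u"
    using eventually_at_right_less[of 0] by eventually_elim (simp add: box_set_def)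
  then show ?thesis using that eventually_happens'[OF trivial_limit_at_right_real] by blast
qed

lemma finite_cone_separation:
  fixes G :: "'a::euclidean_space set"
  assumes "finite G" "c \<notin> convex_cone hull G"
  obtains a where "\<And>g. g \<in> G \<Longrightarrow> 0 \<le> a \<bullet> g" "a \<bullet> c < 0"
proof -
  obtain a \<beta> where a_c: "a \<bullet> c < \<beta>" and a_hull: "\<And>v. v \<in> convex_cone hull G \<Longrightarrow> \<beta> < a \<bullet> v"
    using separating_hyperplane_closed_point[OF convex_convex_cone_hull closed_convex_cone_hull, of G c]
      assms by blast
  have \<beta>: "\<beta> < 0" using a_hull[OF convex_cone_hull_contains_0] by simp
  have "0 \<le> a \<bullet> g" if "g \<in> G" for g
  proof (rule ccontr)
    assume neg: "\<not> 0 \<le> a \<bullet> g"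
    have "(\<beta> / (a \<bullet> g)) *\<^sub>R g \<in> convex_cone hull G"
      using neg \<beta> that by (intro convex_cone_hull_mul hull_inc) (simp_all add: divide_nonpos_neg)
    then have "\<beta> < a \<bullet> ((\<beta> / (a \<bullet> g)) *\<^sub>R g)" by (rule a_hull)
    with neg show False by simp
  qed
  moreover have "a \<bullet> c < 0" using a_c \<beta> by simp
  ultimately show ?thesis by (rule that)
qed

definition box_normal_cone ::
    "('n::finite \<Rightarrow> ereal) \<Rightarrow> ('n \<Rightarrow> ereal) \<Rightarrow> real^'n \<Rightarrow> (real^'n) set" where
  "box_normal_cone l u xs =
     {v. \<forall>i. (0 < v $ i \<longrightarrow> ereal (xs $ i) = u i) \<and> (v $ i < 0 \<longrightarrow> ereal (xs $ i) = l i)}"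

lemma box_normal_cone_inner_le:
  assumes "v \<in> box_normal_cone l u xs" "z \<in> box_set l u"
  shows "v \<bullet> (z - xs) \<le> 0"
proof -
  have "v $ i * (z - xs) $ i \<le> 0" for i
  proof -
    have z: "l i \<le> ereal (z $ i)" "ereal (z $ i) \<le> u i" using assms(2) by (auto simp: box_set_def)
    consider "0 < v $ i" | "v $ i < 0" | "v $ i = 0" by linarith
    then show ?thesis
    proof cases
      case 1
      then have "z $ i \<le> xs $ i" using assms(1) z by (auto simp: box_normal_cone_def) (metis ereal_less_eq(3))
      with 1 show ?thesis by (simp add: mult_nonneg_nonpos)
    next
      case 2
      then have "xs $ i \<le> z $ i" using assms(1) z by (auto simp: box_normal_cone_def) (metis ereal_less_eq(3))
      with 2 show ?thesis by (simp add: mult_nonpos_nonneg)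
    qed simp
  qed
  then show ?thesis by (simp add: inner_vec_def sum_nonpos)
qed

lemma convex_cone_box_normal_cone: "convex_cone (box_normal_cone l u xs)"
  unfolding convex_cone_iff
proof (intro conjI ballI allI impI)
  show "0 \<in> box_normal_cone l u xs" by (simp add: box_normal_cone_def)
next
  fix v w assume "v \<in> box_normal_cone l u xs" "w \<in> box_normal_cone l u xs"
  then show "v + w \<in> box_normal_cone l u xs"
    unfolding box_normal_cone_def by (auto, smt (verit), smt (verit))
next
  fix v and t :: real assume "v \<in> box_normal_cone l u xs" "0 \<le> t"
  then show "t *\<^sub>R v \<in> box_normal_cone l u xs"
    unfolding box_normal_cone_def by (auto simp: zero_less_mult_iff mult_less_0_iff)
qed

definition kkt_point :: "real^'n^'m \<Rightarrow> real^'m \<Rightarrow> real^'n \<Rightarrow> (real^'n::finite) set \<Rightarrow>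
    real^'n \<Rightarrow> real^'m::finite \<Rightarrow> bool" where
  "kkt_point A b c K x y \<longleftrightarrow>
     x \<in> K \<and> A *v x = b \<and> (\<forall>z\<in>K. (transpose A *v y - c) \<bullet> (z - x) \<le> 0)"

lemma primal_opt_no_descent_direction:
  assumes opt: "primal_opt A b c (box_set l u) xs" and "A *v a = 0"
    and "\<And>i. 0 < a $ i \<Longrightarrow> ereal (xs $ i) \<noteq> u i"
    and "\<And>i. a $ i < 0 \<Longrightarrow> ereal (xs $ i) \<noteq> l i"
  shows "0 \<le> c \<bullet> a"
proof -
  have xs: "xs \<in> box_set l u" "A *v xs = b" using opt by (auto simp: primal_opt_def)
  obtain t where t: "t > 0" "xs + t *\<^sub>R a \<in> box_set l u"
    using box_set_feasible_direction[OF xs(1)] assms(3,4) by blast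
  have "A *v (xs + t *\<^sub>R a) = b"
    using xs(2) \<open>A *v a = 0\<close> by (simp add: matrix_vector_right_distrib matrix_vector_mult_scaleR)
  with t(2) opt have "c \<bullet> xs \<le> c \<bullet> (xs + t *\<^sub>R a)" by (auto simp: primal_opt_def)
  then have "0 \<le> t * (c \<bullet> a)" by (simp add: inner_add_right)
  with t(1) show ?thesis by (simp add: zero_le_mult_iff)
qed

lemma vector_matrix_mult_uminus: "(- x) v* A = - (x v* (A::'a::comm_ring_1^'n^'m))"
  by (simp add: vector_matrix_mult_def vec_eq_iff sum_negf)

definition multiplier_cone ::
    "real^'n^'m \<Rightarrow> ('n::finite \<Rightarrow> ereal) \<Rightarrow> ('n \<Rightarrow> ereal) \<Rightarrow> real^'n \<Rightarrow> (real^'n) set" where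
  "multiplier_cone A l u xs = (\<lambda>p. transpose A *v fst p - snd p) ` (UNIV \<times> box_normal_cone l u xs)"

lemma convex_cone_multiplier_cone: "convex_cone (multiplier_cone A l u xs)"
proof -
  have "linear (\<lambda>p. transpose A *v fst p - snd p)"
    using linear_compose_sub[OF linear_compose[OF linear_fst matrix_vector_mul_linear] linear_snd]
    by (simp only: o_def)
  then show ?thesis
    unfolding multiplier_cone_def
    by (intro convex_cone_linear_image conjI convex_cone_Times convex_cone_box_normal_cone)
      (auto simp: convex_cone_iff)
qed

text \<open>Farkas' lemma for the finitely generated cone below: a separating direction would be a
  feasible descent direction at the optimum.\<close>

lemma primal_opt_imp_mem_multiplier_cone:
  fixes A :: "real^'n::finite^'m::finite"
  assumes opt: "primal_opt A b c (box_set l u) xs"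
  shows "c \<in> multiplier_cone A l u xs"
proof -
  let ?N = "box_normal_cone l u xs" and ?e = "\<lambda>i. axis i (1::real)"
  define G where "G = range (\<lambda>j. transpose A *v ?e j) \<union> range (\<lambda>j. - (transpose A *v ?e j))
     \<union> (\<lambda>i. - ?e i) ` {i. ereal (xs $ i) = u i} \<union> ?e ` {i. ereal (xs $ i) = l i}"
  have "G \<subseteq> multiplier_cone A l u xs"
  proof -
    have "0 \<in> ?N" "\<And>i. ereal (xs $ i) = u i \<Longrightarrow> ?e i \<in> ?N"
      "\<And>i. ereal (xs $ i) = l i \<Longrightarrow> - ?e i \<in> ?N"
      by (auto simp: box_normal_cone_def axis_def)
    then show ?thesis
      unfolding G_def multiplier_cone_def
      by (auto intro: image_eqI[where x="(?e _, 0)"] image_eqI[where x="(- ?e _, 0)"]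
          image_eqI[where x="(0, ?e _)"] image_eqI[where x="(0, - ?e _)"]
          simp: vector_matrix_mult_uminus)
  qed
  then have hull_G: "convex_cone hull G \<subseteq> multiplier_cone A l u xs"
    using convex_cone_multiplier_cone[of A l u xs] by (simp add: hull_minimal)
  have "c \<in> convex_cone hull G"
  proof (rule ccontr)
    assume "c \<notin> convex_cone hull G"
    moreover have "finite G" unfolding G_def by simp
    ultimately obtain a where a_G: "\<And>g. g \<in> G \<Longrightarrow> 0 \<le> a \<bullet> g" and a_c: "a \<bullet> c < 0"
      using finite_cone_separation by blast
    have "(A *v a) $ j = 0" for j
      using a_G[of "transpose A *v ?e j"] a_G[of "- (transpose A *v ?e j)"]
      by (simp add: G_def inner_commute[of a] dot_lmul_matrix inner_axis')
    then have "A *v a = 0" by (simp add: vec_eq_iff)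
    moreover have "a $ i \<le> 0" if "ereal (xs $ i) = u i" for i
      using that a_G[of "- ?e i"] by (simp add: G_def inner_axis)
    moreover have "0 \<le> a $ i" if "ereal (xs $ i) = l i" for i
      using that a_G[of "?e i"] by (simp add: G_def inner_axis)
    ultimately have "0 \<le> c \<bullet> a"
      by (intro primal_opt_no_descent_direction[OF opt]) force+
    with a_c show False by (simp add: inner_commute)
  qed
  with hull_G show ?thesis by blast
qed

lemma kkt_point_exists:
  assumes "primal_opt A b c (box_set l u) xs"
  obtains y where "kkt_point A b c (box_set l u) xs y"
proof -
  obtain y v where "c = transpose A *v y - v" "v \<in> box_normal_cone l u xs"
    using primal_opt_imp_mem_multiplier_cone[OF assms] by (auto simp: multiplier_cone_def)
  then have "kkt_point A b c (box_set l u) xs y"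
    using assms box_normal_cone_inner_le by (auto simp: kkt_point_def primal_opt_def)
  then show ?thesis by (rule that)
qed

lemma kkt_point_imp_primal_opt:
  assumes "kkt_point A b c K x y"
  shows "primal_opt A b c K x"
  unfolding primal_opt_def
proof (intro conjI allI impI)
  show "x \<in> K" "A *v x = b" using assms by (auto simp: kkt_point_def)
  fix x' assume x': "x' \<in> K \<and> A *v x' = b"
  have "(transpose A *v y - c) \<bullet> (x' - x) \<le> 0" using assms x' by (auto simp: kkt_point_def)
  moreover have "(transpose A *v y) \<bullet> (x' - x) = 0"
    using x' assms by (simp add: kkt_point_def dot_lmul_matrix matrix_vector_mult_diff_distrib)
  ultimately show "c \<bullet> x \<le> c \<bullet> x'" by (simp add: inner_diff_left inner_diff_right)
qed

lemma kkt_point_imp_dual_opt: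
  assumes "kkt_point A b c K x y"
  shows "dual_opt A b c K y"
proof -
  have x: "x \<in> K" "A *v x = b" using assms by (auto simp: kkt_point_def)
  have duality_gap: "b \<bullet> y' - (transpose A *v y' - c) \<bullet> x = c \<bullet> x" for y'
  proof -
    have "x \<bullet> (y' v* A) = b \<bullet> y'" using x(2) by (metis dot_lmul_matrix inner_commute)
    then show ?thesis by (simp add: inner_diff_left inner_diff_right inner_commute)
  qed
  have "support_fun K (transpose A *v y - c) = ereal ((transpose A *v y - c) \<bullet> x)"
    unfolding support_fun_def
  proof (rule antisym)
    show "(SUP z\<in>K. ereal ((transpose A *v y - c) \<bullet> z)) \<le> ereal ((transpose A *v y - c) \<bullet> x)"
      using assms by (intro SUP_least) (auto simp: kkt_point_def inner_diff_right)
  qed (use x in \<open>intro SUP_upper\<close>)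
  then have dual_value: "dual_obj A b c K y = ereal (c \<bullet> x)"
    unfolding dual_obj_def using duality_gap[of y] by simp
  have "dual_obj A b c K y' \<le> ereal (c \<bullet> x)" for y'
  proof -
    have "ereal ((transpose A *v y' - c) \<bullet> x) \<le> support_fun K (transpose A *v y' - c)"
      unfolding support_fun_def using x by (intro SUP_upper)
    then have "dual_obj A b c K y' \<le> ereal (b \<bullet> y') - ereal ((transpose A *v y' - c) \<bullet> x)"
      unfolding dual_obj_def by (intro ereal_minus_mono) auto
    then show ?thesis using duality_gap[of y'] by simp
  qed
  then show ?thesis unfolding dual_opt_def dual_value by auto
qed

lemma convergent_quasi_decreasing:
  fixes B e :: "nat \<Rightarrow> real"
  assumes "\<And>k. 0 \<le> B k" "\<And>k. B (Suc k) \<le> B k + e k" "\<And>k. 0 \<le> e k" "summable e"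
  shows "convergent B"
proof -
  define C where "C k = B k - (\<Sum>j<k. e j)" for k
  have "decseq C" unfolding decseq_Suc_iff C_def by (simp add: diff_le_eq assms(2))
  moreover have "\<forall>k. - suminf e \<le> C k"
  proof
    fix k
    have "(\<Sum>j<k. e j) \<le> suminf e" by (rule sum_le_suminf[OF assms(4)]) (simp_all add: assms(3))
    then show "- suminf e \<le> C k" unfolding C_def using assms(1)[of k] by linarith
  qed
  ultimately obtain L where "C \<longlonglongrightarrow> L" using decseq_convergent by blast
  then have "(\<lambda>k. C k + (\<Sum>j<k. e j)) \<longlonglongrightarrow> L + suminf e"
    using summable_LIMSEQ[OF assms(4)] by (intro tendsto_add)
  then show ?thesis unfolding C_def convergent_def by auto
qed

lemma le_add_of_power2_le:
  fixes p q r :: real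
  assumes "0 \<le> p" "0 \<le> q" "0 \<le> r" "p\<^sup>2 \<le> q\<^sup>2 + 2 * r * p"
  shows "p \<le> q + 2 * r"
proof (rule ccontr)
  assume "\<not> p \<le> q + 2 * r"
  then have "q * q < p * (p - 2 * r)" using assms(2,3) by (smt (verit) mult_strict_mono)
  with assms(4) show False by (simp add: power2_eq_square algebra_simps)
qed

lemma power2_norm_eq_diff_inner:
  fixes a b :: "'a::real_inner"
  shows "(norm a)\<^sup>2 = (norm (a - b))\<^sup>2 + (norm b)\<^sup>2 + 2 * ((a - b) \<bullet> b)"
  by (simp add: power2_norm_eq_inner inner_diff_left inner_diff_right inner_commute)

lemma norm_le_sqrt_weighted_sum:
  fixes a :: "'a::real_normed_vector" and b :: "'b::real_normed_vector"
  assumes "t0 \<le> t" "0 < t0"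
  shows "norm a \<le> sqrt ((norm a)\<^sup>2 + t * (norm b)\<^sup>2)"
    and "norm b \<le> sqrt (((norm a)\<^sup>2 + t * (norm b)\<^sup>2) / t0)"
proof -
  show "norm a \<le> sqrt ((norm a)\<^sup>2 + t * (norm b)\<^sup>2)"
    using assms by (intro real_le_rsqrt) auto
  have "t0 * (norm b)\<^sup>2 \<le> t * (norm b)\<^sup>2" using assms(1) by (simp add: mult_right_mono)
  then have "(norm b)\<^sup>2 \<le> ((norm a)\<^sup>2 + t * (norm b)\<^sup>2) / t0"
    using assms(2) by (simp add: pos_le_divide_eq mult.commute add_increasing)
  then show "norm b \<le> sqrt (((norm a)\<^sup>2 + t * (norm b)\<^sup>2) / t0)" by (rule real_le_rsqrt)
qed

lemma tendsto_zero_of_weighted_sum: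
  fixes f :: "nat \<Rightarrow> 'a::real_normed_vector" and g :: "nat \<Rightarrow> 'b::real_normed_vector"
  assumes lim: "(\<lambda>k. (norm (f k))\<^sup>2 + t k * (norm (g k))\<^sup>2) \<longlonglongrightarrow> 0"
    and t0: "\<And>k. t0 \<le> t k" "0 < t0"
  shows "f \<longlonglongrightarrow> 0" "g \<longlonglongrightarrow> 0"
proof -
  have "(\<lambda>k. sqrt ((norm (f k))\<^sup>2 + t k * (norm (g k))\<^sup>2)) \<longlonglongrightarrow> 0"
    using tendsto_real_sqrt[OF lim] by simp
  then show "f \<longlonglongrightarrow> 0"
    by (rule Lim_null_comparison[OF always_eventually, rotated])
      (use norm_le_sqrt_weighted_sum(1)[OF t0] in blast)
  have "(\<lambda>k. sqrt (((norm (f k))\<^sup>2 + t k * (norm (g k))\<^sup>2) / t0)) \<longlonglongrightarrow> 0"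
    using tendsto_real_sqrt[OF tendsto_divide[OF lim tendsto_const[of t0]]] t0(2) by simp
  then show "g \<longlonglongrightarrow> 0"
    by (rule Lim_null_comparison[OF always_eventually, rotated])
      (use norm_le_sqrt_weighted_sum(2)[OF t0] in blast)
qed

locale snipal =
  fixes A :: "real^'n::finite^'m::finite" and b :: "real^'m" and c :: "real^'n"
    and K :: "(real^'n) set"
    and \<sigma> \<tau> \<epsilon> :: "nat \<Rightarrow> real" and tau_inf :: real
    and x :: "nat \<Rightarrow> real^'n" and y :: "nat \<Rightarrow> real^'m"
  assumes K_closed: "closed K" and K_convex: "convex K" and K_nonempty: "K \<noteq> {}"
    and sigma_pos: "\<sigma> 0 > 0" and sigma_mono: "incseq \<sigma>"
    and tau_pos: "\<And>k. \<tau> k > 0" and tau_mono: "decseq \<tau>"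
    and tau_lim: "\<tau> \<longlonglongrightarrow> tau_inf" and tau_inf_pos: "tau_inf > 0"
    and eps_nonneg: "\<And>k. \<epsilon> k \<ge> 0" and eps_summable: "summable \<epsilon>"
    and stop_crit: "\<And>k. norm (grad_psi A b c K (\<sigma> k) (\<tau> k) (x k) (y k) (y (Suc k)))
                    \<le> min (sqrt (\<tau> k)) 1 / \<sigma> k * \<epsilon> k"
    and x_update: "\<And>k. x (Suc k) = proj_K K (x k - \<sigma> k *\<^sub>R (c - transpose A *v y (Suc k)))"
begin

definition grad :: "nat \<Rightarrow> real^'m" where
  "grad k = grad_psi A b c K (\<sigma> k) (\<tau> k) (x k) (y k) (y (Suc k))"

definition merit :: "real \<Rightarrow> real^'n \<Rightarrow> real^'m \<Rightarrow> nat \<Rightarrow> real" where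
  "merit t xs ys k = (norm (x k - xs))\<^sup>2 + t * (norm (y k - ys))\<^sup>2"

lemma sigma_ge: "\<sigma> 0 \<le> \<sigma> k"
  using sigma_mono by (simp add: incseq_def)

lemma sigma_pos_all: "0 < \<sigma> k"
  using sigma_pos sigma_ge by (rule less_le_trans)

lemma tau_le: "\<tau> k \<le> \<tau> 0"
  using tau_mono by (simp add: decseq_def)

lemma tau_ge: "tau_inf \<le> \<tau> k"
  using decseq_ge[OF tau_mono tau_lim] .

lemma x_in_K: "x (Suc k) \<in> K"
  unfolding x_update proj_K_def using K_closed K_nonempty by (rule closest_point_in_set)

lemma merit_nonneg: "0 \<le> t \<Longrightarrow> 0 \<le> merit t xs ys k"
  by (simp add: merit_def)

lemma merit_mono: "t \<le> t' \<Longrightarrow> merit t xs ys k \<le> merit t' xs ys k"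
  by (simp add: merit_def mult_right_mono)

lemma grad_eq: "grad k = A *v x (Suc k) - b + (\<tau> k / \<sigma> k) *\<^sub>R (y (Suc k) - y k)"
proof -
  have "x k + \<sigma> k *\<^sub>R (transpose A *v y (Suc k) - c) = x k - \<sigma> k *\<^sub>R (c - transpose A *v y (Suc k))"
    by (simp add: algebra_simps)
  then show ?thesis unfolding grad_def grad_psi_def x_update by simp
qed

lemma sigma_norm_grad_le:
  shows "\<sigma> k * norm (grad k) \<le> sqrt (\<tau> k) * \<epsilon> k" and "\<sigma> k * norm (grad k) \<le> \<epsilon> k"
proof -
  have "\<sigma> k * norm (grad k) \<le> min (sqrt (\<tau> k)) 1 * \<epsilon> k"
    using stop_crit[of k] sigma_pos_all[of k] unfolding grad_def by (simp add: field_simps)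
  moreover have "min (sqrt (\<tau> k)) 1 * \<epsilon> k \<le> sqrt (\<tau> k) * \<epsilon> k"
    "min (sqrt (\<tau> k)) 1 * \<epsilon> k \<le> 1 * \<epsilon> k"
    using eps_nonneg[of k] by (intro mult_right_mono; simp)+
  ultimately show "\<sigma> k * norm (grad k) \<le> sqrt (\<tau> k) * \<epsilon> k" "\<sigma> k * norm (grad k) \<le> \<epsilon> k"
    by linarith+
qed

lemma x_update_variational_ineq:
  assumes "z \<in> K"
  shows "(x k - x (Suc k)) \<bullet> (z - x (Suc k)) + \<sigma> k * ((transpose A *v y (Suc k) - c) \<bullet> (z - x (Suc k))) \<le> 0"
proof -
  have "(x k - \<sigma> k *\<^sub>R (c - transpose A *v y (Suc k)) - x (Suc k)) \<bullet> (z - x (Suc k)) \<le> 0"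
    using closest_point_dot[OF K_convex K_closed assms] unfolding x_update proj_K_def .
  moreover have "x k - \<sigma> k *\<^sub>R (c - transpose A *v y (Suc k)) - x (Suc k)
      = (x k - x (Suc k)) + \<sigma> k *\<^sub>R (transpose A *v y (Suc k) - c)"
    by (simp add: algebra_simps)
  ultimately show ?thesis by (simp only: inner_add_left inner_scaleR_left)
qed

lemma merit_step:
  assumes kkt: "kkt_point A b c K xs ys"
  shows "merit (\<tau> k) xs ys (Suc k) \<le> merit (\<tau> k) xs ys k - merit (\<tau> k) (x (Suc k)) (y (Suc k)) k
           + 2 * (\<sigma> k * ((y (Suc k) - ys) \<bullet> grad k))"
proof -
  define X where "X = x (Suc k) - xs"
  define Y where "Y = y (Suc k) - ys"
  have xs: "xs \<in> K" "A *v xs = b" using kkt by (auto simp: kkt_point_def)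
  have "0 \<le> (x k - x (Suc k)) \<bullet> X + \<sigma> k * ((transpose A *v y (Suc k) - c) \<bullet> X)"
    using x_update_variational_ineq[OF xs(1), of k] unfolding X_def
    by (smt (verit) inner_minus_right minus_diff_eq mult_minus_right)
  moreover have "(transpose A *v ys - c) \<bullet> X \<le> 0"
    using kkt x_in_K[of k] unfolding kkt_point_def X_def by blast
  moreover have "(transpose A *v y (Suc k) - c) \<bullet> X - (transpose A *v ys - c) \<bullet> X = Y \<bullet> (A *v X)"
    unfolding Y_def by (simp add: inner_diff_left dot_lmul_matrix[symmetric] vector_matrix_mult_diff_distrib)
  moreover have "\<sigma> k * (Y \<bullet> (A *v X)) = \<sigma> k * (Y \<bullet> grad k) + \<tau> k * ((y k - y (Suc k)) \<bullet> Y)"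
    using sigma_pos_all[of k] unfolding grad_eq X_def Y_def
    by (simp add: matrix_vector_mult_diff_distrib xs(2) inner_add_right inner_diff_right
        inner_commute algebra_simps)
  ultimately have "- (\<sigma> k * (Y \<bullet> grad k)) \<le> (x k - x (Suc k)) \<bullet> X + \<tau> k * ((y k - y (Suc k)) \<bullet> Y)"
    using sigma_pos_all[of k] by (smt (verit) mult_left_mono)
  moreover have "(norm (x k - xs))\<^sup>2 = (norm (x k - x (Suc k)))\<^sup>2 + (norm X)\<^sup>2 + 2 * ((x k - x (Suc k)) \<bullet> X)"
    using power2_norm_eq_diff_inner[of "x k - xs" X] by (simp add: X_def)
  moreover have "\<tau> k * (norm (y k - ys))\<^sup>2
      = \<tau> k * (norm (y k - y (Suc k)))\<^sup>2 + \<tau> k * (norm Y)\<^sup>2 + 2 * (\<tau> k * ((y k - y (Suc k)) \<bullet> Y))"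
    using power2_norm_eq_diff_inner[of "y k - ys" Y] by (simp add: Y_def distrib_left)
  ultimately show ?thesis
    unfolding merit_def X_def[symmetric] Y_def[symmetric] by linarith
qed

lemma sigma_inner_grad_le:
  "\<sigma> k * ((y (Suc k) - ys) \<bullet> grad k) \<le> \<epsilon> k * sqrt (merit (\<tau> k) xs ys (Suc k))"
proof -
  have "\<sigma> k * ((y (Suc k) - ys) \<bullet> grad k) \<le> \<sigma> k * (norm (y (Suc k) - ys) * norm (grad k))"
    by (rule mult_left_mono[OF norm_cauchy_schwarz]) (use sigma_pos_all[of k] in simp)
  also have "\<dots> = norm (y (Suc k) - ys) * (\<sigma> k * norm (grad k))"
    by (simp add: mult.left_commute)
  also have "\<dots> \<le> norm (y (Suc k) - ys) * (sqrt (\<tau> k) * \<epsilon> k)"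
    using sigma_norm_grad_le(1)[of k] by (intro mult_left_mono) auto
  also have "\<dots> = \<epsilon> k * sqrt (\<tau> k * (norm (y (Suc k) - ys))\<^sup>2)"
    using tau_pos[of k] by (simp add: real_sqrt_mult)
  also have "\<dots> \<le> \<epsilon> k * sqrt (merit (\<tau> k) xs ys (Suc k))"
    unfolding merit_def using eps_nonneg[of k] by (intro mult_left_mono real_sqrt_le_mono) auto
  finally show ?thesis .
qed

lemma merit_quasi_fejer:
  assumes "kkt_point A b c K xs ys"
  shows "sqrt (merit (\<tau> (Suc k)) xs ys (Suc k)) \<le> sqrt (merit (\<tau> k) xs ys k) + 2 * \<epsilon> k"
    and "merit (\<tau> k) (x (Suc k)) (y (Suc k)) k \<le> merit (\<tau> k) xs ys k - merit (\<tau> (Suc k)) xs ys (Suc k)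
           + 2 * \<epsilon> k * (sqrt (merit (\<tau> k) xs ys k) + 2 * \<epsilon> k)"
proof -
  let ?\<Phi> = "merit (\<tau> k) xs ys k" and ?\<Psi> = "merit (\<tau> k) xs ys (Suc k)"
    and ?D = "merit (\<tau> k) (x (Suc k)) (y (Suc k)) k"
  have nonneg: "0 \<le> ?\<Phi>" "0 \<le> ?\<Psi>" "0 \<le> ?D"
    using tau_pos[of k] by (simp_all add: merit_nonneg less_imp_le)
  have descent: "?\<Psi> \<le> ?\<Phi> - ?D + 2 * \<epsilon> k * sqrt ?\<Psi>"
    using merit_step[OF assms, of k] sigma_inner_grad_le[of k ys xs] by linarith
  have "sqrt ?\<Psi> \<le> sqrt ?\<Phi> + 2 * \<epsilon> k"
    using descent nonneg eps_nonneg[of k] by (intro le_add_of_power2_le) simp_all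
  moreover have shift: "merit (\<tau> (Suc k)) xs ys (Suc k) \<le> ?\<Psi>"
    using tau_mono by (intro merit_mono) (simp add: decseq_Suc_iff)
  ultimately show "sqrt (merit (\<tau> (Suc k)) xs ys (Suc k)) \<le> sqrt ?\<Phi> + 2 * \<epsilon> k"
    by (meson order_trans real_sqrt_le_mono)
  have "2 * \<epsilon> k * sqrt ?\<Psi> \<le> 2 * \<epsilon> k * (sqrt ?\<Phi> + 2 * \<epsilon> k)"
    using \<open>sqrt ?\<Psi> \<le> _\<close> eps_nonneg[of k] by (intro mult_left_mono) auto
  then show "?D \<le> ?\<Phi> - merit (\<tau> (Suc k)) xs ys (Suc k) + 2 * \<epsilon> k * (sqrt ?\<Phi> + 2 * \<epsilon> k)"
    using descent shift by linarith
qed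

lemma merit_convergent:
  assumes "kkt_point A b c K xs ys"
  shows "convergent (\<lambda>k. merit (\<tau> k) xs ys k)"
    and "(\<lambda>k. merit (\<tau> k) (x (Suc k)) (y (Suc k)) k) \<longlonglongrightarrow> 0"
proof -
  define B where "B k = sqrt (merit (\<tau> k) xs ys k)" for k
  have merit_eq: "merit (\<tau> k) xs ys k = (B k)\<^sup>2" for k
    unfolding B_def using tau_pos[of k] by (simp add: merit_nonneg less_imp_le)
  have "convergent B"
    using merit_quasi_fejer(1)[OF assms] eps_nonneg eps_summable
    by (intro convergent_quasi_decreasing[of B "\<lambda>k. 2 * \<epsilon> k"])
      (auto simp: B_def merit_nonneg less_imp_le[OF tau_pos])
  then obtain L where L: "B \<longlonglongrightarrow> L" by (auto simp: convergent_def)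
  then have merit_lim: "(\<lambda>k. merit (\<tau> k) xs ys k) \<longlonglongrightarrow> L\<^sup>2"
    unfolding merit_eq by (intro tendsto_intros)
  then show "convergent (\<lambda>k. merit (\<tau> k) xs ys k)" by (auto simp: convergent_def)
  have "(\<lambda>k. merit (\<tau> k) xs ys k - merit (\<tau> (Suc k)) xs ys (Suc k) + 2 * \<epsilon> k * (B k + 2 * \<epsilon> k))
        \<longlonglongrightarrow> L\<^sup>2 - L\<^sup>2 + 2 * 0 * (L + 2 * 0)"
    using merit_lim LIMSEQ_Suc[OF merit_lim] summable_LIMSEQ_zero[OF eps_summable] L
    by (intro tendsto_intros)
  then have upper: "(\<lambda>k. merit (\<tau> k) xs ys k - merit (\<tau> (Suc k)) xs ys (Suc k)
      + 2 * \<epsilon> k * (B k + 2 * \<epsilon> k)) \<longlonglongrightarrow> 0" by simp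
  show "(\<lambda>k. merit (\<tau> k) (x (Suc k)) (y (Suc k)) k) \<longlonglongrightarrow> 0"
  proof (rule tendsto_sandwich[OF _ _ tendsto_const upper])
    show "\<forall>\<^sub>F k in sequentially. 0 \<le> merit (\<tau> k) (x (Suc k)) (y (Suc k)) k"
      using tau_pos by (simp add: merit_nonneg less_imp_le)
    show "\<forall>\<^sub>F k in sequentially. merit (\<tau> k) (x (Suc k)) (y (Suc k)) k
        \<le> merit (\<tau> k) xs ys k - merit (\<tau> (Suc k)) xs ys (Suc k) + 2 * \<epsilon> k * (B k + 2 * \<epsilon> k)"
      using merit_quasi_fejer(2)[OF assms] by (simp add: B_def)
  qed
qed

lemma steps_tendsto_zero:
  assumes "kkt_point A b c K xs ys"
  shows "(\<lambda>k. x k - x (Suc k)) \<longlonglongrightarrow> 0" "(\<lambda>k. y k - y (Suc k)) \<longlonglongrightarrow> 0"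
  using tendsto_zero_of_weighted_sum[OF merit_convergent(2)[OF assms, unfolded merit_def] tau_ge tau_inf_pos]
  by auto

lemma bounded_iterates:
  assumes "kkt_point A b c K xs ys"
  shows "bounded (range x)" "bounded (range y)"
proof -
  obtain M where "\<forall>k. norm (merit (\<tau> k) xs ys k) \<le> M"
    using BseqE[OF convergent_imp_Bseq[OF merit_convergent(1)[OF assms]]] by blast
  then have M: "merit (\<tau> k) xs ys k \<le> M" for k by (metis abs_le_D1 real_norm_def)
  have dist: "norm (x k - xs) \<le> sqrt M" "norm (y k - ys) \<le> sqrt (M / tau_inf)" for k
  proof -
    have "sqrt (merit (\<tau> k) xs ys k) \<le> sqrt M" "sqrt (merit (\<tau> k) xs ys k / tau_inf) \<le> sqrt (M / tau_inf)"
      using M[of k] tau_inf_pos by (simp_all add: divide_right_mono)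
    then show "norm (x k - xs) \<le> sqrt M" "norm (y k - ys) \<le> sqrt (M / tau_inf)"
      using norm_le_sqrt_weighted_sum[OF tau_ge[of k] tau_inf_pos, where a="x k - xs" and b="y k - ys"]
      unfolding merit_def by linarith+
  qed
  have "norm (x k) \<le> norm xs + sqrt M" "norm (y k) \<le> norm ys + sqrt (M / tau_inf)" for k
    using dist[of k] norm_triangle_sub[of "x k" xs] norm_triangle_sub[of "y k" ys] by linarith+
  then show "bounded (range x)" "bounded (range y)" unfolding bounded_iff by blast+
qed

lemma norm_grad_le: "norm (grad k) \<le> \<epsilon> k / \<sigma> 0"
proof -
  have "\<sigma> 0 * norm (grad k) \<le> \<sigma> k * norm (grad k)"
    using sigma_ge by (simp add: mult_right_mono)
  with sigma_norm_grad_le(2)[of k] sigma_pos show ?thesis by (simp add: pos_le_divide_eq mult.commute)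
qed

lemma primal_residual_tendsto_zero:
  assumes "(\<lambda>k. y k - y (Suc k)) \<longlonglongrightarrow> 0"
  shows "(\<lambda>k. A *v x (Suc k)) \<longlonglongrightarrow> b"
proof -
  have bound: "norm (A *v x (Suc k) - b) \<le> \<epsilon> k / \<sigma> 0 + \<tau> 0 / \<sigma> 0 * norm (y k - y (Suc k))" for k
  proof -
    have "\<tau> k / \<sigma> k \<le> \<tau> 0 / \<sigma> 0"
      using tau_pos[of k] tau_le[of k] sigma_pos sigma_ge[of k] by (intro frac_le) auto
    moreover have "norm ((\<tau> k / \<sigma> k) *\<^sub>R (y (Suc k) - y k)) = \<tau> k / \<sigma> k * norm (y k - y (Suc k))"
      using tau_pos[of k] sigma_pos_all[of k] by (simp add: norm_minus_commute)
    ultimately have "norm ((\<tau> k / \<sigma> k) *\<^sub>R (y (Suc k) - y k)) \<le> \<tau> 0 / \<sigma> 0 * norm (y k - y (Suc k))"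
      by (metis mult_right_mono norm_ge_zero)
    moreover have "A *v x (Suc k) - b = grad k - (\<tau> k / \<sigma> k) *\<^sub>R (y (Suc k) - y k)"
      by (simp add: grad_eq)
    ultimately show ?thesis
      using norm_grad_le[of k] norm_triangle_ineq4[of "grad k"] by (smt (verit))
  qed
  have "(\<lambda>k. \<epsilon> k / \<sigma> 0 + \<tau> 0 / \<sigma> 0 * norm (y k - y (Suc k))) \<longlonglongrightarrow> 0"
    using summable_LIMSEQ_zero[OF eps_summable] tendsto_norm_zero[OF assms]
    by (intro tendsto_add_zero tendsto_divide_zero tendsto_mult_right_zero)
  moreover have "\<forall>k. norm (A *v x (Suc k) - b) \<le> \<epsilon> k / \<sigma> 0 + \<tau> 0 / \<sigma> 0 * norm (y k - y (Suc k))"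
    using bound by blast
  ultimately have "(\<lambda>k. A *v x (Suc k) - b) \<longlonglongrightarrow> 0"
    by (rule Lim_null_comparison[OF always_eventually, rotated])
  then show ?thesis by (rule LIM_zero_cancel)
qed

lemma dual_residual_le:
  assumes "z \<in> K"
  shows "(transpose A *v y (Suc k) - c) \<bullet> (z - x (Suc k))
           \<le> norm (x k - x (Suc k)) * norm (z - x (Suc k)) / \<sigma> 0"
proof -
  let ?R = "norm (x k - x (Suc k)) * norm (z - x (Suc k))"
  have "\<sigma> k * ((transpose A *v y (Suc k) - c) \<bullet> (z - x (Suc k))) \<le> - ((x k - x (Suc k)) \<bullet> (z - x (Suc k)))"
    using x_update_variational_ineq[OF assms, of k] by linarith
  also have "\<dots> \<le> ?R"
    using norm_cauchy_schwarz[of "- (x k - x (Suc k))" "z - x (Suc k)"] by (simp only: inner_minus_left norm_minus_cancel)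
  finally have "(transpose A *v y (Suc k) - c) \<bullet> (z - x (Suc k)) \<le> ?R / \<sigma> k"
    using sigma_pos_all[of k] by (simp add: pos_le_divide_eq mult.commute)
  also have "\<dots> \<le> ?R / \<sigma> 0"
    using sigma_pos sigma_ge[of k] by (intro divide_left_mono) auto
  finally show ?thesis .
qed

lemma cluster_point_kkt:
  assumes steps: "(\<lambda>k. x k - x (Suc k)) \<longlonglongrightarrow> 0" "(\<lambda>k. y k - y (Suc k)) \<longlonglongrightarrow> 0"
    and r: "strict_mono r"
    and lim: "(\<lambda>k. x (Suc (r k))) \<longlonglongrightarrow> xb" "(\<lambda>k. y (Suc (r k))) \<longlonglongrightarrow> yb"
  shows "kkt_point A b c K xb yb"
proof -
  have "xb \<in> K" using closed_sequentially[OF K_closed _ lim(1)] x_in_K by blast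
  moreover have "A *v xb = b"
  proof (rule LIMSEQ_unique)
    show "(\<lambda>k. A *v x (Suc (r k))) \<longlonglongrightarrow> A *v xb"
      using lim(1) by (rule bounded_linear.tendsto[OF matrix_vector_mul_bounded_linear])
    show "(\<lambda>k. A *v x (Suc (r k))) \<longlonglongrightarrow> b"
      using LIMSEQ_subseq_LIMSEQ[OF primal_residual_tendsto_zero[OF steps(2)] r] by (simp add: o_def)
  qed
  moreover have "(transpose A *v yb - c) \<bullet> (z - xb) \<le> 0" if "z \<in> K" for z
  proof (rule LIMSEQ_le)
    show "(\<lambda>k. (transpose A *v y (Suc (r k)) - c) \<bullet> (z - x (Suc (r k))))
        \<longlonglongrightarrow> (transpose A *v yb - c) \<bullet> (z - xb)"
      using bounded_linear.tendsto[OF matrix_vector_mul_bounded_linear lim(2)] lim(1)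
      by (intro tendsto_intros)
    have "(\<lambda>k. norm (x (r k) - x (Suc (r k)))) \<longlonglongrightarrow> 0"
      using LIMSEQ_subseq_LIMSEQ[OF tendsto_norm_zero[OF steps(1)] r] by (simp add: o_def)
    then have "(\<lambda>k. norm (x (r k) - x (Suc (r k))) * norm (z - x (Suc (r k)))) \<longlonglongrightarrow> 0 * norm (z - xb)"
      using lim(1) by (intro tendsto_intros)
    then show "(\<lambda>k. norm (x (r k) - x (Suc (r k))) * norm (z - x (Suc (r k))) / \<sigma> 0) \<longlonglongrightarrow> 0"
      by (intro tendsto_divide_zero) simp
  qed (use dual_residual_le[OF that] in auto)
  ultimately show ?thesis by (simp add: kkt_point_def)
qed

lemma iterates_converge_to_kkt_point:
  assumes "kkt_point A b c K xs ys"
  obtains xb yb where "kkt_point A b c K xb yb" "x \<longlonglongrightarrow> xb" "y \<longlonglongrightarrow> yb"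
proof -
  have "bounded (range (\<lambda>k. (x (Suc k), y (Suc k))))"
    using bounded_Times[OF bounded_iterates[OF assms]] by (rule bounded_subset) auto
  then obtain r p where r: "strict_mono r" and lim: "((\<lambda>k. (x (Suc k), y (Suc k))) \<circ> r) \<longlonglongrightarrow> p"
    using bounded_imp_convergent_subsequence by blast
  define xb where "xb = fst p"
  define yb where "yb = snd p"
  have xr: "(\<lambda>k. x (Suc (r k))) \<longlonglongrightarrow> xb" and yr: "(\<lambda>k. y (Suc (r k))) \<longlonglongrightarrow> yb"
    using tendsto_fst[OF lim] tendsto_snd[OF lim] by (simp_all add: xb_def yb_def o_def)
  have kkt: "kkt_point A b c K xb yb"
    using steps_tendsto_zero[OF assms] r xr yr by (rule cluster_point_kkt)
  obtain L where L: "(\<lambda>k. merit (\<tau> k) xb yb k) \<longlonglongrightarrow> L"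
    using merit_convergent(1)[OF kkt] by (auto simp: convergent_def)
  have "(\<lambda>k. merit (\<tau> (Suc (r k))) xb yb (Suc (r k))) \<longlonglongrightarrow> L"
    using LIMSEQ_subseq_LIMSEQ[OF LIMSEQ_Suc[OF L] r] by (simp add: o_def)
  moreover have "(\<lambda>k. \<tau> (Suc (r k))) \<longlonglongrightarrow> tau_inf"
    using LIMSEQ_subseq_LIMSEQ[OF LIMSEQ_Suc[OF tau_lim] r] by (simp add: o_def)
  then have "(\<lambda>k. merit (\<tau> (Suc (r k))) xb yb (Suc (r k)))
      \<longlonglongrightarrow> (norm (xb - xb))\<^sup>2 + tau_inf * (norm (yb - yb))\<^sup>2"
    using xr yr unfolding merit_def by (intro tendsto_intros)
  ultimately have "L = 0" by (simp add: LIMSEQ_unique)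
  with L have "(\<lambda>k. (norm (x k - xb))\<^sup>2 + \<tau> k * (norm (y k - yb))\<^sup>2) \<longlonglongrightarrow> 0"
    by (simp add: merit_def)
  from tendsto_zero_of_weighted_sum[OF this tau_ge tau_inf_pos]
  have "x \<longlonglongrightarrow> xb" "y \<longlonglongrightarrow> yb" by (simp_all add: LIM_zero_iff)
  with kkt show ?thesis by (rule that)
qed

end

theorem mainTheorem8:
  fixes A :: "real^'n^'m" and b :: "real^'m" and c :: "real^'n"
    and l u :: "'n \<Rightarrow> ereal"
    and \<sigma> \<tau> \<epsilon> :: "nat \<Rightarrow> real" and tau_inf :: real
    and x :: "nat \<Rightarrow> real^'n" and y :: "nat \<Rightarrow> real^'m"
  assumes l_ne: "\<And>i. l i \<noteq> \<infinity>" and u_ne: "\<And>i. u i \<noteq> -\<infinity>"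
    and P_sol: "\<exists>xs. primal_opt A b c (box_set l u) xs"
    and D_sol: "\<exists>ys. dual_opt A b c (box_set l u) ys"
    and full_rank: "rank A = CARD('m)"
    and sigma_pos: "\<sigma> 0 > 0" and sigma_mono: "incseq \<sigma>"
    and tau_pos: "\<And>k. \<tau> k > 0" and tau_mono: "decseq \<tau>"
    and tau_lim: "\<tau> \<longlonglongrightarrow> tau_inf" and tau_inf_pos: "tau_inf > 0"
    and eps_nonneg: "\<And>k. \<epsilon> k \<ge> 0" and eps_summable: "summable \<epsilon>"
    and stop_A: "\<And>k. norm (grad_psi A b c (box_set l u) (\<sigma> k) (\<tau> k) (x k) (y k) (y (Suc k)))
                    \<le> min (sqrt (\<tau> k)) 1 / \<sigma> k * \<epsilon> k"
    and x_update: "\<And>k. x (Suc k) = proj_K (box_set l u) (x k - \<sigma> k *\<^sub>R (c - transpose A *v y (Suc k)))"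
  shows "bounded (range (\<lambda>k. (y k, x k))) \<and>
         (\<exists>xs. primal_opt A b c (box_set l u) xs \<and> x \<longlonglongrightarrow> xs) \<and>
         (\<exists>ys. dual_opt A b c (box_set l u) ys \<and> y \<longlonglongrightarrow> ys)"
proof -
  obtain xs where xs: "primal_opt A b c (box_set l u) xs" using P_sol by blast
  then obtain ys where kkt: "kkt_point A b c (box_set l u) xs ys" by (rule kkt_point_exists)
  have "box_set l u \<noteq> {}" using xs by (auto simp: primal_opt_def)
  then interpret snipal A b c "box_set l u" \<sigma> \<tau> \<epsilon> tau_inf x y
    using box_set_closed box_set_convex sigma_pos sigma_mono tau_pos tau_mono tau_lim tau_inf_pos
      eps_nonneg eps_summable stop_A x_update
    by unfold_locales
  obtain xb yb where lim: "kkt_point A b c (box_set l u) xb yb" "x \<longlonglongrightarrow> xb" "y \<longlonglongrightarrow> yb"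
    using iterates_converge_to_kkt_point[OF kkt] .
  moreover have "bounded (range (\<lambda>k. (y k, x k)))"
    using tendsto_Pair[OF lim(3,2)] by (rule convergent_imp_bounded)
  ultimately show ?thesis using kkt_point_imp_primal_opt kkt_point_imp_dual_opt by blast
qed

end
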